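(* Let $\lambda$ be a partition and $c=(x,y)\in\overline{\lambda}$ with $x>\lambda_1$ and $y>\lambda'_1$. Then for every $\nu\in\mathcal{U}(\lambda)$, \[ P^{q,t}_\lambda(\nu\mid c)=t^{n(\nu/\lambda)}\alpha_{\nu/\lambda}(q,t). \] In particular $P^{q,t}_\lambda(\nu\mid c)$ does not depend on the choice of such $c$.
   Context: Partitions are Young diagrams in French convention: cells $(x,y)\in\mathbb{Z}_{>0}^2$ with $x\le\lambda_y$; $\lambda'$ is the conjugate ($\lambda_j=0$ for $j>\lambda'_1$, $\lambda'_i=0$ for $i>\lambda_1$). For $c=(x,y)\in\lambda$: $a_\lambda(c)=\lambda_y-x$, $\ell_\lambda(c)=\lambda'_x-y$; $n(\kappa)=\sum_{c\in\kappa}\ell_\kappa(c)$, $n(\nu/\lambda)=n(\nu)-n(\lambda)$. $\mathcal{U}(\lambda)$ is the set of partitions obtained by adding one cell to $\lambda$. For $\lambda\subseteq\nu$, $\mathcal{R}_{\nu/\lambda}$ (resp. $\mathcal{C}_{\nu/\lambda}$) is the set of cells of $\lambda$ in a row (resp. column) containing a cell of $\nu/\lambda$. With $[i,j]=1-q^it^j$: $\alpha_{\nu/\lambda}(q,t)=\prod_{c\in\mathcal{R}_{\nu/\lambda}}\frac{[a_\lambda(c),\ell_\lambda(c)+1]}{[a_\nu(c),\ell_\nu(c)+1]}\prod_{c\in\mathcal{C}_{\nu/\lambda}}\frac{[a_\lambda(c)+1,\ell_\lambda(c)]}{[a_\nu(c)+1,\ell_\nu(c)]}$. Exterior hook walk: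 $\overline{\lambda}=\mathbb{Z}_{>0}^2\setminus\lambda$. For $c=(x,y)\in\overline{\lambda}$: ${\rm arm}_\lambda(c)=\{(i,y):\lambda_y<i<x\}$, ${\rm leg}_\lambda(c)=\{(x,j):\lambda'_x<j<y\}$, $a(c)=|{\rm arm}_\lambda(c)|$, $\ell(c)=|{\rm leg}_\lambda(c)|$; $c$ is an outer corner of $\lambda$ iff $a(c)=\ell(c)=0$. For $c'\in{\rm arm}_\lambda(c)\cup{\rm leg}_\lambda(c)$ set $P(c\rightarrow c')=q^{a(c)-i}\frac{t^{\ell(c)}(1-q)}{1-q^{a(c)}t^{\ell(c)}}$ if $c'=(x-i,y)\in{\rm arm}_\lambda(c)$, and $P(c\rightarrow c')=t^{j-1}\frac{1-t}{1-q^{a(c)}t^{\ell(c)}}$ if $c'=(x,y-j)\in{\rm leg}_\lambda(c)$. The exterior $(q,t)$-hook walk from $c$ terminates if $c$ is an outer corner, and otherwise moves to $c'$ with probability $P(c\rightarrow c')$ and repeats. $P^{q,t}_\lambda(\nu\mid c)$ is the probability (a rational function of $q,t$: sum over walks of products of step probabilities) that the walk from $c$ terminates at the cell $\nu/\lambda$. *)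

theory Defs
  imports Complex_Main
begin

text \<open>Partitions are represented as weakly decreasing lists of positive naturals
  (lambda_1 >= lambda_2 >= ... > 0).  Cells are pairs (x,y) with x,y >= 1 in French convention.\<close>

definition is_partition :: "nat list \<Rightarrow> bool" where
  "is_partition lam \<longleftrightarrow> sorted_wrt (\<ge>) lam \<and> 0 \<notin> set lam"

definition part :: "nat list \<Rightarrow> nat \<Rightarrow> nat" where
  "part lam y = (if 1 \<le> y \<and> y \<le> length lam then lam ! (y - 1) else 0)"

definition conj :: "nat list \<Rightarrow> nat \<Rightarrow> nat" where
  "conj lam x = length (filter (\<lambda>r. x \<le> r) lam)"

definition cells :: "nat list \<Rightarrow> (nat \<times> nat) set" where
  "cells lam = {(x, y). 1 \<le> x \<and> 1 \<le> y \<and> x \<le> part lam y}"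

definition arm :: "nat list \<Rightarrow> nat \<times> nat \<Rightarrow> nat" where
  "arm lam c = part lam (snd c) - fst c"

definition leg :: "nat list \<Rightarrow> nat \<times> nat \<Rightarrow> nat" where
  "leg lam c = conj lam (fst c) - snd c"

definition n_part :: "nat list \<Rightarrow> nat" where
  "n_part lam = (\<Sum>c\<in>cells lam. leg lam c)"

definition add_one :: "nat list \<Rightarrow> nat list set" where
  "add_one lam = {nu. is_partition nu \<and> cells lam \<subseteq> cells nu \<and> card (cells nu - cells lam) = 1}"

definition rowset :: "nat list \<Rightarrow> nat list \<Rightarrow> (nat \<times> nat) set" where
  "rowset nu lam = {c \<in> cells lam. \<exists>d \<in> cells nu - cells lam. snd d = snd c}"

definition colset :: "nat list \<Rightarrow> nat list \<Rightarrow> (nat \<times> nat) set" where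
  "colset nu lam = {c \<in> cells lam. \<exists>d \<in> cells nu - cells lam. fst d = fst c}"

definition br :: "real \<Rightarrow> real \<Rightarrow> nat \<Rightarrow> nat \<Rightarrow> real" where
  "br q t i j = 1 - q ^ i * t ^ j"

definition alpha :: "nat list \<Rightarrow> nat list \<Rightarrow> real \<Rightarrow> real \<Rightarrow> real" where
  "alpha nu lam q t =
     (\<Prod>c\<in>rowset nu lam. br q t (arm lam c) (leg lam c + 1) / br q t (arm nu c) (leg nu c + 1)) *
     (\<Prod>c\<in>colset nu lam. br q t (arm lam c + 1) (leg lam c) / br q t (arm nu c + 1) (leg nu c))"

definition ext_arm :: "nat list \<Rightarrow> nat \<times> nat \<Rightarrow> nat" where
  "ext_arm lam c = fst c - part lam (snd c) - 1"

definition ext_leg :: "nat list \<Rightarrow> nat \<times> nat \<Rightarrow> nat" where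
  "ext_leg lam c = snd c - conj lam (fst c) - 1"

text \<open>Probability that the exterior (q,t)-hook walk started at c terminates at cell d:
  sum over walks of products of step probabilities.\<close>
function hw :: "nat list \<Rightarrow> real \<Rightarrow> real \<Rightarrow> nat \<times> nat \<Rightarrow> nat \<times> nat \<Rightarrow> real" where
  "hw lam q t c d =
     (let a = ext_arm lam c; l = ext_leg lam c in
      if a = 0 \<and> l = 0 then (if c = d then 1 else 0)
      else (\<Sum>i\<in>{1..a}. q ^ (a - i) * t ^ l * (1 - q) / (1 - q ^ a * t ^ l) * hw lam q t (fst c - i, snd c) d)
         + (\<Sum>j\<in>{1..l}. t ^ (j - 1) * (1 - t) / (1 - q ^ a * t ^ l) * hw lam q t (fst c, snd c - j) d))"
  by pat_completeness auto
termination
  by (relation "measure (\<lambda>(lam, q, t, c, d). fst c + snd c)")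
     (auto simp: ext_arm_def ext_leg_def)

definition hook_prob :: "nat list \<Rightarrow> real \<Rightarrow> real \<Rightarrow> nat list \<Rightarrow> nat \<times> nat \<Rightarrow> real" where
  "hook_prob lam q t nu c = hw lam q t c (the_elem (cells nu - cells lam))"

end

theory Submission
  imports Defs
begin

(*
  Let (u, v) be the cell of nu/lambda and w(x, y) the probability that the walk from (x, y)
  stops at (u, v). The walk only moves left or down, so w vanishes unless x >= u and y >= v;
  there its one-step recurrence is also satisfied by w(x, v) w(u, y), which has the same
  boundary values, hence w(x, y) = w(x, v) w(u, y).

  Along row v the recurrence says that consecutive partial sums of q^(x' - u) w(x', v) have
  ratio [a + 1, l] / [a, l], where l depends on the column height lambda'_x. Regrouping this
  product over columns by rows turns w(x, v), for x > lambda_1, into t^(v - 1) times the factor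
  of alpha coming from the cells below (u, v). Column u is treated in the same way with q and t
  exchanged and gives the factor of alpha coming from the cells left of (u, v). Finally
  n(nu) - n(lambda) = v - 1, as exactly the legs of the v - 1 cells below (u, v) grow by one.
*)

lemma part_Cons: "part (r # rs) y = (if y = 1 then r else part rs (y - 1))"
  by (auto simp: part_def nth_Cons')

lemma conj_Cons: "conj (r # rs) x = (if x \<le> r then Suc (conj rs x) else conj rs x)"
  by (simp add: conj_def)

lemma le_conj_iff_le_part:
  assumes "sorted_wrt (\<ge>) lam" "1 \<le> x" "1 \<le> y"
  shows "y \<le> conj lam x \<longleftrightarrow> x \<le> part lam y"
  using assms
proof (induction lam arbitrary: y)
  case Nil
  then show ?case by (simp add: conj_def part_def)
next
  case (Cons r rs)
  have "conj rs x = 0" if "r < x"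
    using Cons.prems(1) that by (auto simp: conj_def filter_empty_conv)
  moreover have "part rs (y - 1) \<le> r"
    using Cons.prems(1) by (auto simp: part_def)
  ultimately show ?case
    using Cons.IH[of "y - 1"] Cons.prems by (auto simp: conj_Cons part_Cons; linarith)
qed

lemma part_antimono:
  assumes "sorted_wrt (\<ge>) lam" "1 \<le> y" "y \<le> y'"
  shows "part lam y' \<le> part lam y"
  using assms by (cases "y = y'") (auto simp: part_def sorted_wrt_iff_nth_less)

lemma conj_antimono: "x \<le> x' \<Longrightarrow> conj lam x' \<le> conj lam x"
  by (induction lam) (auto simp: conj_def)

lemma row_of_cells: "1 \<le> y \<Longrightarrow> {x. (x, y) \<in> cells lam} = {1..part lam y}"
  by (auto simp: cells_def)

lemma column_of_cells:
  "sorted_wrt (\<ge>) lam \<Longrightarrow> 1 \<le> x \<Longrightarrow> {y. (x, y) \<in> cells lam} = {1..conj lam x}"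
  using le_conj_iff_le_part by (fastforce simp: cells_def)

lemma finite_cells:
  assumes "sorted_wrt (\<ge>) lam"
  shows "finite (cells lam)"
proof (rule finite_subset)
  show "cells lam \<subseteq> {1..part lam 1} \<times> {1..length lam}"
    using part_antimono[OF assms, of 1] by (fastforce simp: cells_def part_def split: if_splits)
qed simp

locale outer_corner =
  fixes lam :: "nat list" and u v :: nat
  assumes sorted: "sorted_wrt (\<ge>) lam"
    and u_pos: "1 \<le> u" and v_pos: "1 \<le> v"
    and part_corner: "part lam v = u - 1"
    and conj_corner: "conj lam u = v - 1"
begin

lemma part_le_corner: "v \<le> y \<Longrightarrow> part lam y \<le> u - 1"
  using part_antimono[OF sorted v_pos] part_corner by metis

lemma conj_le_corner: "u \<le> x \<Longrightarrow> conj lam x \<le> v - 1"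
  using conj_antimono conj_corner by metis

lemma corner_le_if_beyond_first_row: "part lam 1 < x \<Longrightarrow> u \<le> x"
  using part_antimono[OF sorted order.refl v_pos] part_corner by simp

lemma corner_le_if_beyond_first_column: "conj lam 1 < y \<Longrightarrow> v \<le> y"
  using conj_antimono[OF u_pos, of lam] conj_corner by simp

lemma corner_not_in_cells: "(u, v) \<notin> cells lam"
  using part_corner u_pos by (auto simp: cells_def)

end

locale corner_extension = outer_corner +
  fixes nu :: "nat list"
  assumes part_nu: "\<And>y. 1 \<le> y \<Longrightarrow> part nu y = (if y = v then u else part lam y)"
    and conj_nu: "\<And>x. 1 \<le> x \<Longrightarrow> conj nu x = (if x = u then v else conj lam x)"
begin

lemma cells_nu: "cells nu = insert (u, v) (cells lam)"
  using part_nu part_corner u_pos v_pos by (auto simp: cells_def split: if_splits)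

lemma cells_diff: "cells nu - cells lam = {(u, v)}"
  using cells_nu corner_not_in_cells by auto

lemma rowset_eq: "rowset nu lam = (\<lambda>x. (x, v)) ` {1..u - 1}"
  unfolding rowset_def cells_diff using part_corner v_pos by (auto simp: cells_def)

lemma colset_eq: "colset nu lam = (\<lambda>y. (u, y)) ` {1..v - 1}"
  unfolding colset_def cells_diff
  using le_conj_iff_le_part[OF sorted u_pos] conj_corner u_pos by (auto simp: cells_def)

lemma alpha_eq:
  "alpha nu lam q t =
    (\<Prod>x\<in>{1..u - 1}. br q t (u - 1 - x) (Suc (conj lam x - v)) / br q t (u - x) (Suc (conj lam x - v))) *
    (\<Prod>y\<in>{1..v - 1}. br q t (Suc (part lam y - u)) (v - 1 - y) / br q t (Suc (part lam y - u)) (v - y))"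
  unfolding alpha_def
proof (intro arg_cong2[where f = "(*)"] prod.reindex_cong)
  show "rowset nu lam = (\<lambda>x. (x, v)) ` {1..u - 1}" "colset nu lam = (\<lambda>y. (u, y)) ` {1..v - 1}"
    by (rule rowset_eq colset_eq)+
  show "inj_on (\<lambda>x. (x, v)) {1..u - 1}" "inj_on (\<lambda>y. (u, y)) {1..v - 1}"
    by (auto simp: inj_on_def)
next
  fix x assume "x \<in> {1..u - 1}"
  then show "br q t (arm lam (x, v)) (leg lam (x, v) + 1) / br q t (arm nu (x, v)) (leg nu (x, v) + 1) =
      br q t (u - 1 - x) (Suc (conj lam x - v)) / br q t (u - x) (Suc (conj lam x - v))"
    using part_corner part_nu[OF v_pos] conj_nu[of x] by (auto simp: arm_def leg_def)
next
  fix y assume "y \<in> {1..v - 1}"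
  then show "br q t (arm lam (u, y) + 1) (leg lam (u, y)) / br q t (arm nu (u, y) + 1) (leg nu (u, y)) =
      br q t (Suc (part lam y - u)) (v - 1 - y) / br q t (Suc (part lam y - u)) (v - y)"
    using conj_corner conj_nu[OF u_pos] part_nu[of y] by (auto simp: arm_def leg_def)
qed

lemma n_part_eq: "n_part nu = n_part lam + (v - 1)"
proof -
  have leg_nu: "leg nu c = leg lam c + (if c \<in> colset nu lam then 1 else 0)"
    if "c \<in> cells lam" for c
  proof -
    obtain x y where c: "c = (x, y)" "1 \<le> x" "1 \<le> y" "x \<le> part lam y"
      using \<open>c \<in> cells lam\<close> by (cases c) (auto simp: cells_def)
    have "x = u \<Longrightarrow> y < v"
      using c le_conj_iff_le_part[OF sorted u_pos, of y] conj_corner by auto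
    then show ?thesis
      using c conj_nu[of x] conj_corner by (auto simp: leg_def colset_eq)
  qed
  have "n_part nu = leg nu (u, v) + (\<Sum>c\<in>cells lam. leg nu c)"
    unfolding n_part_def cells_nu using finite_cells[OF sorted] corner_not_in_cells by simp
  also have "(\<Sum>c\<in>cells lam. leg nu c) = n_part lam + card (cells lam \<inter> colset nu lam)"
    using finite_cells[OF sorted] by (simp add: leg_nu sum.distrib sum.If_cases n_part_def)
  also have "cells lam \<inter> colset nu lam = colset nu lam"
    by (auto simp: colset_def)
  also have "card (colset nu lam) = v - 1"
    by (simp add: colset_eq card_image inj_on_def)
  finally show ?thesis
    using conj_nu[OF u_pos] by (simp add: leg_def)
qed

end

lemma add_one_corner_extension:
  assumes "is_partition lam" "nu \<in> add_one lam"
  obtains u v where "corner_extension lam u v nu"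
proof -
  have sorted: "sorted_wrt (\<ge>) lam" "sorted_wrt (\<ge>) nu"
    using assms by (auto simp: is_partition_def add_one_def)
  obtain u v where "cells nu - cells lam = {(u, v)}"
    using assms(2) by (auto simp: add_one_def card_1_singleton_iff)
  then have cells_nu: "cells nu = insert (u, v) (cells lam)" and new: "(u, v) \<notin> cells lam"
    using assms(2) by (auto simp: add_one_def)
  have u_pos: "1 \<le> u" and v_pos: "1 \<le> v"
    using cells_nu by (auto simp: cells_def)
  have row_nu: "{x. (x, y) \<in> cells nu} =
      (if y = v then insert u {x. (x, y) \<in> cells lam} else {x. (x, y) \<in> cells lam})" for y
    using cells_nu by auto
  have col_nu: "{y. (x, y) \<in> cells nu} =
      (if x = u then insert v {y. (x, y) \<in> cells lam} else {y. (x, y) \<in> cells lam})" for x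
    using cells_nu by auto
  have part_nu: "part nu y = (if y = v then Suc (part lam y) else part lam y)" if "1 \<le> y" for y
  proof -
    have "card {1..part nu y} = card (if y = v then insert u {1..part lam y} else {1..part lam y})"
      using row_nu[of y] by (simp only: row_of_cells[OF that])
    then show ?thesis
      using new that by (auto simp: cells_def split: if_splits)
  qed
  have conj_nu: "conj nu x = (if x = u then Suc (conj lam x) else conj lam x)" if "1 \<le> x" for x
  proof -
    have "card {1..conj nu x} = card (if x = u then insert v {1..conj lam x} else {1..conj lam x})"
      using col_nu[of x] by (simp only: column_of_cells[OF sorted(2) that] column_of_cells[OF sorted(1) that])
    then show ?thesis
      using new that column_of_cells[OF sorted(1) that] by (auto split: if_splits)
  qed
  have "(u, v) \<in> cells nu"
    using cells_nu by simp
  then have part_corner: "part lam v = u - 1" and conj_corner: "conj lam u = v - 1"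
    using new part_nu[OF v_pos] conj_nu[OF u_pos] le_conj_iff_le_part[OF sorted(1) u_pos v_pos]
      le_conj_iff_le_part[OF sorted(2) u_pos v_pos] by (auto simp: cells_def)
  show thesis
  proof (rule that, unfold_locales)
    show "part nu y = (if y = v then u else part lam y)" if "1 \<le> y" for y
      using part_nu[OF that] part_corner u_pos by auto
    show "conj nu x = (if x = u then v else conj lam x)" if "1 \<le> x" for x
      using conj_nu[OF that] conj_corner v_pos by auto
  qed (use sorted u_pos v_pos part_corner conj_corner in simp_all)
qed

lemma br_nonzero:
  fixes q t :: real
  assumes "0 \<le> q" "q < 1" "0 \<le> t" "t < 1" "0 < i \<or> 0 < j"
  shows "br q t i j \<noteq> 0"
proof -
  have "q ^ i \<le> 1" "t ^ j \<le> 1" "q ^ i < 1 \<or> t ^ j < 1"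
    using assms by (auto simp: power_le_one power_less_one_iff)
  then have "q ^ i * t ^ j < 1"
    using assms(1,3) by (smt (verit) mult_left_le mult_left_le_one_le zero_le_power)
  then show ?thesis
    by (simp add: br_def)
qed

lemma br_swap: "br t q j i = br q t i j"
  by (simp add: br_def mult.commute)

lemma prod_br_telescope:
  fixes q t :: real
  assumes "\<And>j. j \<le> M \<Longrightarrow> br q t i j \<noteq> 0" "k \<le> M"
  shows "(\<Prod>y\<in>{1..k}. br q t i (M - y) / br q t i (Suc M - y)) = br q t i (M - k) / br q t i M"
proof -
  have "(\<Prod>y\<in>{1..k}. br q t i (M - y) / br q t i (Suc M - y)) =
      (\<Prod>y = Suc 0..k. br q t i (M - y) / br q t i (M - (y - 1)))"
    using assms(2) by (intro prod.cong) (auto simp: Suc_diff_le)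
  also have "\<dots> = br q t i (M - k) / br q t i (M - 0)"
    using assms by (intro prod_telescope'') auto
  finally show ?thesis
    by simp
qed

(* d is the conjugate of c: the product over the columns a <= k of the diagram of c is regrouped
   into a product over its rows y, each truncated at length k. *)
lemma prod_br_staircase:
  fixes q t :: real
  assumes q: "0 \<le> q" "q < 1" and t: "0 \<le> t" "t < 1"
    and conjugate: "\<And>a y. 1 \<le> a \<Longrightarrow> 1 \<le> y \<Longrightarrow> y \<le> c a \<longleftrightarrow> a \<le> d y"
    and bounded: "\<And>a. 1 \<le> a \<Longrightarrow> c a \<le> M"
  shows "(\<Prod>a\<in>{1..k}. br q t (Suc a) (M - c a) / br q t a (M - c a)) =
    br q t (Suc k) M / br q t 1 0 *
    (\<Prod>y\<in>{1..M}. br q t (Suc (min (d y) k)) (M - y) / br q t (Suc (min (d y) k)) (Suc M - y))"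
proof (induction k)
  case 0
  have "br q t 1 j \<noteq> 0" for j
    using br_nonzero[OF q t] by simp
  then show ?case
    using prod_br_telescope[of M q t 1 M] by simp
next
  case (Suc k)
  define j where "j = c (Suc k)"
  define R where "R i y = br q t (Suc i) (M - y) / br q t (Suc i) (Suc M - y)" for i y
  define rest where "rest = (\<Prod>y\<in>{Suc j..M}. R (min (d y) k) y)"
  have nonzero: "br q t (Suc i) l \<noteq> 0" "br q t (Suc k) (M - j) \<noteq> 0" for i l
    using br_nonzero[OF q t] by auto
  have "j \<le> M"
    using bounded j_def by simp
  have "y \<le> j \<longleftrightarrow> Suc k \<le> d y" if "1 \<le> y" for y
    using conjugate[of "Suc k" y] that j_def by simp
  then have old_rows: "(\<Prod>y\<in>{1..M}. R (min (d y) k) y) =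
        (\<Prod>y\<in>{1..M}. if y \<le> j then R k y else R (min (d y) k) y)"
      and new_rows: "(\<Prod>y\<in>{1..M}. R (min (d y) (Suc k)) y) =
        (\<Prod>y\<in>{1..M}. if y \<le> j then R (Suc k) y else R (min (d y) k) y)"
    by (auto intro!: prod.cong simp: min_def)
  have split: "(\<Prod>y\<in>{1..M}. if y \<le> j then R i y else R (min (d y) k) y) =
      br q t (Suc i) (M - j) / br q t (Suc i) M * rest" for i
  proof -
    have "{1..M} \<inter> {y. y \<le> j} = {1..j}" "{1..M} \<inter> - {y. y \<le> j} = {Suc j..M}"
      using \<open>j \<le> M\<close> by auto
    then show ?thesis
      unfolding prod.If_cases[OF finite_atLeastAtMost] rest_def R_def
      using prod_br_telescope[of M q t "Suc i" j] nonzero \<open>j \<le> M\<close> by simp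
  qed
  have "(\<Prod>a\<in>{1..Suc k}. br q t (Suc a) (M - c a) / br q t a (M - c a)) =
      br q t (Suc k) M / br q t 1 0 * (\<Prod>y\<in>{1..M}. R (min (d y) k) y) *
      (br q t (Suc (Suc k)) (M - j) / br q t (Suc k) (M - j))"
    using Suc.IH by (simp add: prod.cl_ivl_Suc R_def j_def)
  also have "\<dots> = br q t (Suc (Suc k)) M / br q t 1 0 * (\<Prod>y\<in>{1..M}. R (min (d y) (Suc k)) y)"
    unfolding old_rows new_rows split using nonzero by (simp add: field_simps)
  finally show ?case
    unfolding R_def .
qed

declare hw.simps[simp del]

lemma hw_unreachable: "fst c < fst d \<or> snd c < snd d \<Longrightarrow> hw lam q t c d = 0"
proof (induction lam q t c d rule: hw.induct)
  case (1 lam q t c d)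
  show ?case
  proof (cases "ext_arm lam c = 0 \<and> ext_leg lam c = 0")
    case True
    then show ?thesis
      using "1.prems" by (subst hw.simps) auto
  next
    case False
    have "fst c - i < fst d \<or> snd c < snd d" "fst c < fst d \<or> snd c - i < snd d" for i
      using "1.prems" by auto
    then have "\<forall>i\<in>{1..ext_arm lam c}. hw lam q t (fst c - i, snd c) d = 0"
      "\<forall>j\<in>{1..ext_leg lam c}. hw lam q t (fst c, snd c - j) d = 0"
      using "1.IH"[OF refl refl False] by auto
    then show ?thesis
      using False by (subst hw.simps) (auto simp: Let_def)
  qed
qed

(* Multiplied out by the denominator [a, l], the recurrence also holds at outer corners. *)
lemma hw_recurrence:
  fixes q t :: real
  assumes "part lam y < x" "conj lam x < y" "0 \<le> q" "q < 1" "0 \<le> t" "t < 1"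
  shows "hw lam q t (x, y) d * br q t (x - Suc (part lam y)) (y - Suc (conj lam x)) =
    t ^ (y - Suc (conj lam x)) * (1 - q) *
      (\<Sum>x'\<in>{Suc (part lam y)..<x}. q ^ (x' - Suc (part lam y)) * hw lam q t (x', y) d) +
    (1 - t) * (\<Sum>y'\<in>{Suc (conj lam x)..<y}. t ^ (y - Suc y') * hw lam q t (x, y') d)"
proof -
  define a where "a = x - Suc (part lam y)"
  define l where "l = y - Suc (conj lam x)"
  show ?thesis
  proof (cases "a = 0 \<and> l = 0")
    case True
    then have "x \<le> Suc (part lam y)" "y \<le> Suc (conj lam x)"
      by (auto simp: a_def l_def)
    with True show ?thesis
      by (simp add: a_def l_def br_def)
  next
    case False
    have "br q t a l \<noteq> 0"
      using False assms by (intro br_nonzero) auto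
    have arm_sum: "(\<Sum>i\<in>{1..a}. q ^ (a - i) * hw lam q t (x - i, y) d) =
        (\<Sum>x'\<in>{Suc (part lam y)..<x}. q ^ (x' - Suc (part lam y)) * hw lam q t (x', y) d)"
      by (rule sum.reindex_bij_witness[where i = "\<lambda>x'. x - x'" and j = "\<lambda>i. x - i"])
        (use assms(1) in \<open>auto simp: a_def add.commute\<close>)
    have leg_sum: "(\<Sum>j\<in>{1..l}. t ^ (j - 1) * hw lam q t (x, y - j) d) =
        (\<Sum>y'\<in>{Suc (conj lam x)..<y}. t ^ (y - Suc y') * hw lam q t (x, y') d)"
      by (rule sum.reindex_bij_witness[where i = "\<lambda>y'. y - y'" and j = "\<lambda>j. y - j"])
        (use assms(2) in \<open>auto simp: l_def\<close>)
    have "hw lam q t (x, y) d =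
        (\<Sum>i\<in>{1..a}. q ^ (a - i) * t ^ l * (1 - q) / br q t a l * hw lam q t (x - i, y) d) +
        (\<Sum>j\<in>{1..l}. t ^ (j - 1) * (1 - t) / br q t a l * hw lam q t (x, y - j) d)"
      using False by (subst hw.simps) (simp add: Let_def ext_arm_def ext_leg_def br_def a_def l_def)
    also have "\<dots> = (t ^ l * (1 - q) *
          (\<Sum>x'\<in>{Suc (part lam y)..<x}. q ^ (x' - Suc (part lam y)) * hw lam q t (x', y) d) +
        (1 - t) * (\<Sum>y'\<in>{Suc (conj lam x)..<y}. t ^ (y - Suc y') * hw lam q t (x, y') d)) / br q t a l"
      unfolding arm_sum[symmetric] leg_sum[symmetric]
      by (simp add: sum_distrib_left sum_divide_distrib add_divide_distrib algebra_simps)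
    finally show ?thesis
      using \<open>br q t a l \<noteq> 0\<close> unfolding a_def[symmetric] l_def[symmetric] by simp
  qed
qed

locale corner_walk = outer_corner +
  fixes q t :: real
  assumes q: "0 < q" "q < 1" and t: "0 < t" "t < 1"
begin

abbreviation walk :: "nat \<Rightarrow> nat \<Rightarrow> real" where
  "walk x y \<equiv> hw lam q t (x, y) (u, v)"

definition row_sum :: "nat \<Rightarrow> real" where
  "row_sum x = (\<Sum>x'\<in>{u..<x}. q ^ (x' - u) * walk x' v)"

definition col_sum :: "nat \<Rightarrow> real" where
  "col_sum y = (\<Sum>y'\<in>{v..<y}. t ^ (y - Suc y') * walk u y')"

lemma br_qt_nonzero: "0 < i \<or> 0 < j \<Longrightarrow> br q t i j \<noteq> 0"
  using br_nonzero q t by auto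

lemma walk_corner: "walk u v = 1"
  using part_corner conj_corner u_pos v_pos
  by (subst hw.simps) (simp add: ext_arm_def ext_leg_def)

lemma walk_recurrence:
  assumes "u \<le> x" "v \<le> y"
  shows "walk x y * br q t (x - Suc (part lam y)) (y - Suc (conj lam x)) =
    t ^ (y - Suc (conj lam x)) * (1 - q) * (\<Sum>x'\<in>{u..<x}. q ^ (x' - Suc (part lam y)) * walk x' y) +
    (1 - t) * (\<Sum>y'\<in>{v..<y}. t ^ (y - Suc y') * walk x y')"
proof -
  have "part lam y < u" "conj lam x < v"
    using part_le_corner[OF assms(2)] conj_le_corner[OF assms(1)] u_pos v_pos by auto
  moreover have "(\<Sum>x'\<in>{Suc (part lam y)..<x}. q ^ (x' - Suc (part lam y)) * walk x' y) =
      (\<Sum>x'\<in>{u..<x}. q ^ (x' - Suc (part lam y)) * walk x' y)"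
    "(\<Sum>y'\<in>{Suc (conj lam x)..<y}. t ^ (y - Suc y') * walk x y') =
      (\<Sum>y'\<in>{v..<y}. t ^ (y - Suc y') * walk x y')"
    using calculation by (auto intro!: sum.mono_neutral_right simp: hw_unreachable)
  ultimately show ?thesis
    using hw_recurrence[of lam y x q t "(u, v)"] assms q t by simp
qed

lemma walk_row:
  "u \<le> x \<Longrightarrow>
    walk x v * br q t (x - u) (v - Suc (conj lam x)) = t ^ (v - Suc (conj lam x)) * (1 - q) * row_sum x"
  using walk_recurrence[of x v] part_corner u_pos by (simp add: row_sum_def)

lemma walk_col:
  "v \<le> y \<Longrightarrow> walk u y * br q t (u - Suc (part lam y)) (y - v) = (1 - t) * col_sum y"
  using walk_recurrence[of u y] conj_corner v_pos by (simp add: col_sum_def)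

(* Both sides satisfy walk_recurrence, the right-hand side by walk_row and walk_col. *)
lemma walk_factor:
  "u \<le> x \<Longrightarrow> v \<le> y \<Longrightarrow> walk x y = walk x v * walk u y"
proof (induction "x + y" arbitrary: x y rule: less_induct)
  case less
  show ?case
  proof (cases "x = u \<or> y = v")
    case True
    then show ?thesis
      using walk_corner by auto
  next
    case False
    then have "u < x" "v < y"
      using less.prems by auto
    define a where "a = x - u"
    define m where "m = u - Suc (part lam y)"
    define b where "b = y - v"
    define l where "l = v - Suc (conj lam x)"
    have arm: "x - Suc (part lam y) = a + m" and leg: "y - Suc (conj lam x) = b + l"
      using part_le_corner[of y] conj_le_corner[of x] \<open>u < x\<close> \<open>v < y\<close> u_pos v_pos
      by (auto simp: a_def m_def b_def l_def)
    have row: "(\<Sum>x'\<in>{u..<x}. q ^ (x' - Suc (part lam y)) * walk x' y) = q ^ m * walk u y * row_sum x"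
      unfolding row_sum_def sum_distrib_left
    proof (rule sum.cong)
      fix x' assume "x' \<in> {u..<x}"
      moreover from this have "walk x' y = walk x' v * walk u y"
        using less.hyps[of x' y] less.prems by auto
      moreover have "x' - Suc (part lam y) = m + (x' - u)"
        using \<open>x' \<in> {u..<x}\<close> part_le_corner[of y] less.prems u_pos by (auto simp: m_def)
      ultimately show "q ^ (x' - Suc (part lam y)) * walk x' y = q ^ m * walk u y * (q ^ (x' - u) * walk x' v)"
        by (simp only: power_add mult_ac)
    qed simp
    have col: "(\<Sum>y'\<in>{v..<y}. t ^ (y - Suc y') * walk x y') = walk x v * col_sum y"
      unfolding col_sum_def sum_distrib_left
    proof (rule sum.cong)
      fix y' assume "y' \<in> {v..<y}"
      then have "walk x y' = walk x v * walk u y'"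
        using less.hyps[of x y'] less.prems by auto
      then show "t ^ (y - Suc y') * walk x y' = walk x v * (t ^ (y - Suc y') * walk u y')"
        by simp
    qed simp
    have "walk x y * br q t (a + m) (b + l) =
        t ^ b * q ^ m * walk u y * (t ^ l * (1 - q) * row_sum x) + walk x v * ((1 - t) * col_sum y)"
      using walk_recurrence[of x y] less.prems unfolding arm leg row col by (simp add: power_add mult_ac)
    also have "\<dots> = t ^ b * q ^ m * walk u y * (walk x v * br q t a l) + walk x v * (walk u y * br q t m b)"
      using walk_row[of x] walk_col[of y] less.prems by (simp add: a_def m_def b_def l_def)
    also have "\<dots> = walk x v * walk u y * br q t (a + m) (b + l)"
      by (simp add: br_def power_add algebra_simps)
    finally show ?thesis
      using br_qt_nonzero[of "a + m" "b + l"] \<open>u < x\<close> by (simp add: a_def)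
  qed
qed

lemma row_sum_closed:
  "row_sum (u + Suc k) =
    (\<Prod>a\<in>{1..k}. br q t (Suc a) (v - 1 - conj lam (u + a)) / br q t a (v - 1 - conj lam (u + a)))"
proof (induction k)
  case 0
  then show ?case
    by (simp add: row_sum_def walk_corner)
next
  case (Suc k)
  define x where "x = u + Suc k"
  define l where "l = v - 1 - conj lam x"
  have "walk x v * br q t (Suc k) l = t ^ l * (1 - q) * row_sum x"
    using walk_row[of x] by (simp add: x_def l_def)
  then have "walk x v = t ^ l * (1 - q) * row_sum x / br q t (Suc k) l"
    using br_qt_nonzero[of "Suc k" l] by (simp add: field_simps)
  moreover have "row_sum (Suc x) = row_sum x + q ^ Suc k * walk x v"
    by (simp add: row_sum_def x_def)
  ultimately have "row_sum (Suc x) = row_sum x * (br q t (Suc (Suc k)) l / br q t (Suc k) l)"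
    using br_qt_nonzero[of "Suc k" l] by (simp add: br_def field_simps)
  then show ?case
    using Suc.IH by (simp add: x_def l_def prod.cl_ivl_Suc)
qed

lemma col_sum_closed:
  "col_sum (v + Suc k) =
    (\<Prod>b\<in>{1..k}. br t q (Suc b) (u - 1 - part lam (v + b)) / br t q b (u - 1 - part lam (v + b)))"
proof (induction k)
  case 0
  then show ?case
    by (simp add: col_sum_def walk_corner)
next
  case (Suc k)
  define y where "y = v + Suc k"
  define m where "m = u - 1 - part lam y"
  have "walk u y * br q t m (Suc k) = (1 - t) * col_sum y"
    using walk_col[of y] by (simp add: y_def m_def)
  then have "walk u y = (1 - t) * col_sum y / br q t m (Suc k)"
    using br_qt_nonzero[of m "Suc k"] by (simp add: field_simps)
  moreover have "col_sum (Suc y) = t * col_sum y + walk u y"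
  proof -
    have "(\<Sum>y'\<in>{v..<y}. t ^ (Suc y - Suc y') * walk u y') = t * col_sum y"
      unfolding col_sum_def sum_distrib_left
      by (rule sum.cong) (auto simp flip: Suc_diff_Suc)
    then show ?thesis
      by (simp add: col_sum_def y_def)
  qed
  ultimately have "col_sum (Suc y) = col_sum y * (br q t m (Suc (Suc k)) / br q t m (Suc k))"
    using br_qt_nonzero[of m "Suc k"] by (simp add: br_def field_simps)
  then show ?case
    using Suc.IH by (simp add: y_def m_def prod.cl_ivl_Suc br_swap)
qed

lemma row_sum_beyond_first_row:
  assumes "part lam 1 < u + Suc k"
  shows "row_sum (u + Suc k) = br q t (Suc k) (v - 1) / (1 - q) *
    (\<Prod>y\<in>{1..v - 1}. br q t (Suc (part lam y - u)) (v - 1 - y) / br q t (Suc (part lam y - u)) (v - y))"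
proof -
  have untruncated: "min (part lam y - u) k = part lam y - u" if "1 \<le> y" for y
    using part_antimono[OF sorted order.refl that] assms by simp
  have "y \<le> conj lam (u + a) \<longleftrightarrow> a \<le> part lam y - u" if "1 \<le> a" "1 \<le> y" for a y
    using le_conj_iff_le_part[OF sorted, of "u + a" y] that by auto
  from prod_br_staircase[of q t "\<lambda>a. conj lam (u + a)" "\<lambda>y. part lam y - u" "v - 1" k, OF _ _ _ _ this]
  have "row_sum (u + Suc k) = br q t (Suc k) (v - 1) / br q t 1 0 *
      (\<Prod>y\<in>{1..v - 1}. br q t (Suc (min (part lam y - u) k)) (v - 1 - y) /
        br q t (Suc (min (part lam y - u) k)) (Suc (v - 1) - y))"
    unfolding row_sum_closed using q t conj_le_corner by simp
  also have "\<dots> = br q t (Suc k) (v - 1) / (1 - q) *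
      (\<Prod>y\<in>{1..v - 1}. br q t (Suc (part lam y - u)) (v - 1 - y) / br q t (Suc (part lam y - u)) (v - y))"
    using untruncated v_pos by (auto simp: br_def intro!: prod.cong)
  finally show ?thesis .
qed

lemma col_sum_beyond_first_column:
  assumes "conj lam 1 < v + Suc k"
  shows "col_sum (v + Suc k) = br q t (u - 1) (Suc k) / (1 - t) *
    (\<Prod>x\<in>{1..u - 1}. br q t (u - 1 - x) (Suc (conj lam x - v)) / br q t (u - x) (Suc (conj lam x - v)))"
proof -
  have untruncated: "min (conj lam x - v) k = conj lam x - v" if "1 \<le> x" for x
    using conj_antimono[OF that, of lam] assms by simp
  have "x \<le> part lam (v + b) \<longleftrightarrow> b \<le> conj lam x - v" if "1 \<le> b" "1 \<le> x" for b x
    using le_conj_iff_le_part[OF sorted, of x "v + b"] that by auto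
  from prod_br_staircase[of t q "\<lambda>b. part lam (v + b)" "\<lambda>x. conj lam x - v" "u - 1" k, OF _ _ _ _ this]
  have "col_sum (v + Suc k) = br t q (Suc k) (u - 1) / br t q 1 0 *
      (\<Prod>x\<in>{1..u - 1}. br t q (Suc (min (conj lam x - v) k)) (u - 1 - x) /
        br t q (Suc (min (conj lam x - v) k)) (Suc (u - 1) - x))"
    unfolding col_sum_closed using q t part_le_corner by simp
  also have "\<dots> = br q t (u - 1) (Suc k) / (1 - t) *
      (\<Prod>x\<in>{1..u - 1}. br q t (u - 1 - x) (Suc (conj lam x - v)) / br q t (u - x) (Suc (conj lam x - v)))"
    using untruncated u_pos by (auto simp: br_def mult.commute intro!: prod.cong)
  finally show ?thesis .
qed

lemma walk_row_outside:
  assumes "part lam 1 < x"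
  shows "walk x v = t ^ (v - 1) *
    (\<Prod>y\<in>{1..v - 1}. br q t (Suc (part lam y - u)) (v - 1 - y) / br q t (Suc (part lam y - u)) (v - y))"
    (is "_ = _ * ?P")
proof -
  have "conj lam x = 0"
    using le_conj_iff_le_part[OF sorted, of x 1] assms by linarith
  show ?thesis
  proof (cases "x = u")
    case True
    then show ?thesis
      using \<open>conj lam x = 0\<close> conj_corner walk_corner by simp
  next
    case False
    then obtain k where x: "x = u + Suc k"
      using corner_le_if_beyond_first_row[OF assms]
      by (metis le_neq_implies_less less_imp_Suc_add add_Suc_right)
    have "walk x v * br q t (Suc k) (v - 1) = t ^ (v - 1) * (1 - q) * row_sum x"
      using walk_row[of x] \<open>conj lam x = 0\<close> x by simp
    also have "\<dots> = t ^ (v - 1) * ?P * br q t (Suc k) (v - 1)"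
      using row_sum_beyond_first_row assms q unfolding x by simp
    finally show ?thesis
      using br_qt_nonzero[of "Suc k" "v - 1"] by simp
  qed
qed

lemma walk_col_outside:
  assumes "conj lam 1 < y"
  shows "walk u y =
    (\<Prod>x\<in>{1..u - 1}. br q t (u - 1 - x) (Suc (conj lam x - v)) / br q t (u - x) (Suc (conj lam x - v)))"
    (is "_ = ?P")
proof -
  have "part lam y = 0"
    using le_conj_iff_le_part[OF sorted, of 1 y] assms by linarith
  show ?thesis
  proof (cases "y = v")
    case True
    then show ?thesis
      using \<open>part lam y = 0\<close> part_corner walk_corner by simp
  next
    case False
    then obtain k where y: "y = v + Suc k"
      using corner_le_if_beyond_first_column[OF assms]
      by (metis le_neq_implies_less less_imp_Suc_add add_Suc_right)
    have "walk u y * br q t (u - 1) (Suc k) = (1 - t) * col_sum y"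
      using walk_col[of y] \<open>part lam y = 0\<close> y by simp
    also have "\<dots> = ?P * br q t (u - 1) (Suc k)"
      using col_sum_beyond_first_column assms t unfolding y by simp
    finally show ?thesis
      using br_qt_nonzero[of "u - 1" "Suc k"] by simp
  qed
qed

end

theorem theorem6p5:
  fixes lam nu :: "nat list" and x y :: nat and q t :: real
  assumes "is_partition lam"
    and "x > part lam 1" and "y > conj lam 1"
    and "nu \<in> add_one lam"
    and "0 < q" and "q < 1" and "0 < t" and "t < 1"
  shows "hook_prob lam q t nu (x, y) = t ^ (n_part nu - n_part lam) * alpha nu lam q t"
proof -
  obtain u v where "corner_extension lam u v nu"
    using add_one_corner_extension[OF assms(1,4)] .
  then interpret corner_extension lam u v nu .
  interpret corner_walk lam u v q t
    by unfold_locales (use assms(5-8) in auto)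
  have "hook_prob lam q t nu (x, y) = walk x y"
    by (simp add: hook_prob_def cells_diff)
  also have "\<dots> = walk x v * walk u y"
    using corner_le_if_beyond_first_row[OF assms(2)] corner_le_if_beyond_first_column[OF assms(3)]
    by (rule walk_factor)
  also have "\<dots> = t ^ (n_part nu - n_part lam) * alpha nu lam q t"
    unfolding walk_row_outside[OF assms(2)] walk_col_outside[OF assms(3)] alpha_eq n_part_eq by simp
  finally show ?thesis .
qed

end
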